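(* In the sleeping multi-armed bandit setting, assume the losses are i.i.d.: $(\ell_t)_{t\ge1}$ are i.i.d. random vectors in $[0,1]^K$ with mean vector $\mu=(\mu_1,\dots,\mu_K)$, and for each $t$, $\ell_t$ is independent of everything determined before the learner observes $\ell_t(k_t)$ at round $t$ (in particular of $S_1,\dots,S_t$, of $\ell_1,\dots,\ell_{t-1}$, of $k_1,\dots,k_t$). Let the availability sets $(S_t)$ be arbitrary, where $S_t$ may depend only on $(\ell_s)_{s\le t-1}$ (and past play). Then for any learner (algorithm) and any ordering $\sigma$ of $[K]$, $$\mathbb E\big[R_T^{\mathrm{ordering}}(\sigma)\big]\le\sum_{i=1}^K\sum_{j\in D_i}\mathbb E\big[R_T^{\mathrm{int}}(i\to j)\big],$$ where $D_i=\{j\in[K]:\mu_j\le\mu_i\}$.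
   Context: Sleeping multi-armed bandit setting: $K$ arms $[K]=\{1,\dots,K\}$. At each round $t$ a nonempty availability set $S_t\subseteq[K]$ is revealed, the learner (possibly randomized, using only $S_1,\dots,S_t$, previously observed losses $\ell_s(k_s)$, $s<t$, and internal randomness) selects $k_t\in S_t$ and observes $\ell_t(k_t)$, where $\ell_t\in[0,1]^K$. Internal sleeping regret: $R_T^{\mathrm{int}}(i\to j)=\sum_{t=1}^T\big(\ell_t(k_t)-\ell_t(j)\big)\mathbf 1\{k_t=i,\ j\in S_t\}$ (equal to $0$ when $i=j$). An ordering is a permutation $\sigma=(\sigma_1,\dots,\sigma_K)$ of $[K]$; for nonempty $S\subseteq[K]$, $\sigma(S)=\sigma_m$ where $m=\min\{i:\sigma_i\in S\}$. Ordering regret: $R_T^{\mathrm{ordering}}(\sigma)=\sum_{t=1}^T\big(\ell_t(k_t)-\ell_t(\sigma(S_t))\big)$. *)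

theory Defs
  imports "HOL-Probability.Probability"
begin

text \<open>Arms are 1..K; rounds are 1..T. An ordering is a bijection sigma of {1..K};
  sigma_i is sigma i.\<close>

definition is_ordering :: "nat \<Rightarrow> (nat \<Rightarrow> nat) \<Rightarrow> bool" where
  "is_ordering K \<sigma> \<longleftrightarrow> bij_betw \<sigma> {1..K} {1..K}"

definition ord_sel :: "nat \<Rightarrow> (nat \<Rightarrow> nat) \<Rightarrow> nat set \<Rightarrow> nat" where
  "ord_sel K \<sigma> A = \<sigma> (LEAST i. i \<in> {1..K} \<and> \<sigma> i \<in> A)"

definition int_regret ::
  "(nat \<Rightarrow> 'w \<Rightarrow> nat \<Rightarrow> real) \<Rightarrow> (nat \<Rightarrow> 'w \<Rightarrow> nat set) \<Rightarrow> (nat \<Rightarrow> 'w \<Rightarrow> nat)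
    \<Rightarrow> nat \<Rightarrow> nat \<Rightarrow> nat \<Rightarrow> 'w \<Rightarrow> real" where
  "int_regret L S k T i j w =
     (\<Sum>t=1..T. (L t w (k t w) - L t w j) * (if k t w = i \<and> j \<in> S t w then 1 else 0))"

definition ordering_regret ::
  "nat \<Rightarrow> (nat \<Rightarrow> 'w \<Rightarrow> nat \<Rightarrow> real) \<Rightarrow> (nat \<Rightarrow> 'w \<Rightarrow> nat set) \<Rightarrow> (nat \<Rightarrow> 'w \<Rightarrow> nat)
    \<Rightarrow> nat \<Rightarrow> (nat \<Rightarrow> nat) \<Rightarrow> 'w \<Rightarrow> real" where
  "ordering_regret K L S k T \<sigma> w =
     (\<Sum>t=1..T. L t w (k t w) - L t w (ord_sel K \<sigma> (S t w)))"

definition loss_vec :: "nat \<Rightarrow> (nat \<Rightarrow> 'w \<Rightarrow> nat \<Rightarrow> real) \<Rightarrow> nat \<Rightarrow> 'w \<Rightarrow> (nat \<Rightarrow> real)" where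
  "loss_vec K L t w = restrict (L t w) {1..K}"

abbreviation loss_space :: "nat \<Rightarrow> (nat \<Rightarrow> real) measure" where
  "loss_space K \<equiv> Pi\<^sub>M {1..K} (\<lambda>_. borel)"

end

theory Submission
  imports Defs
begin

text \<open>The loss vector of round t is independent of the information F t on which the choice
  of k t and S t is based, so the loss of any F t-measurable choice of arm may be replaced by
  the mean loss of that arm without changing expectations. Hence both kinds of regret have
  the same expectation as the corresponding regrets for the constant loss vector \<mu>. For
  constant losses the inequality holds pointwise and round by round: if
  \<mu> (\<sigma>(S t)) \<le> \<mu> (k t), the gap \<mu> (k t) - \<mu> (\<sigma>(S t)) is the term
  i = k t, j = \<sigma>(S t) of the right-hand side, all of whose terms are nonnegative because
  j \<in> D i; otherwise the gap is negative.\<close>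

lemma (in prob_space) indep_set_mono:
  assumes "indep_set A B" "A' \<subseteq> A" "B' \<subseteq> B"
  shows "indep_set A' B'"
  using assms unfolding indep_set_def
  by (rule_tac indep_sets_mono_sets) (auto split: bool.split)

lemma (in prob_space) has_bochner_integral_mult_indep:
  fixes X Z :: "'a \<Rightarrow> real"
  assumes indep: "indep_set (sets A) (sets N)"
    and A: "subalgebra M A" and N: "subalgebra M N"
    and X: "X \<in> borel_measurable A" "integrable M X"
    and Z: "Z \<in> borel_measurable N" "integrable M Z"
  shows "has_bochner_integral M (\<lambda>w. X w * Z w) (expectation X * expectation Z)"
proof -
  have "sigma_sets (space M) {X -` B \<inter> space M | B. B \<in> sets borel} \<subseteq> sets A"
    using sets_image_in_sets[OF _ X(1)] A by (auto simp: subalgebra_def sets_vimage_algebra)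
  moreover have "sigma_sets (space M) {Z -` B \<inter> space M | B. B \<in> sets borel} \<subseteq> sets N"
    using sets_image_in_sets[OF _ Z(1)] N by (auto simp: subalgebra_def sets_vimage_algebra)
  ultimately have "indep_var borel X borel Z"
    using indep X(2) Z(2) unfolding indep_var_eq by (auto intro: indep_set_mono)
  then show ?thesis
    using X(2) Z(2)
    by (simp add: has_bochner_integral_iff indep_var_integrable indep_var_lebesgue_integral)
qed

definition same_integral :: "'a measure \<Rightarrow> ('a \<Rightarrow> real) \<Rightarrow> ('a \<Rightarrow> real) \<Rightarrow> bool" where
  "same_integral M f g \<longleftrightarrow> (\<exists>c. has_bochner_integral M f c \<and> has_bochner_integral M g c)"

lemma same_integralI: "has_bochner_integral M f c \<Longrightarrow> has_bochner_integral M g c \<Longrightarrow> same_integral M f g"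
  unfolding same_integral_def by blast

lemma same_integralD:
  assumes "same_integral M f g"
  shows "integrable M f" "integrable M g" "integral\<^sup>L M f = integral\<^sup>L M g"
  using assms unfolding same_integral_def
  by (auto simp: has_bochner_integral_iff)

lemma same_integral_cong:
  assumes "same_integral M f g"
    and "\<And>w. w \<in> space M \<Longrightarrow> f w = f' w" "\<And>w. w \<in> space M \<Longrightarrow> g w = g' w"
  shows "same_integral M f' g'"
proof -
  from assms(1) obtain c where "has_bochner_integral M f c" "has_bochner_integral M g c"
    unfolding same_integral_def by blast
  with assms(2,3) show ?thesis
    by (intro same_integralI[of M f' c g']) (simp_all cong: has_bochner_integral_cong)
qed

lemma same_integral_diff:
  assumes "same_integral M f g" "same_integral M f' g'"
  shows "same_integral M (\<lambda>w. f w - f' w) (\<lambda>w. g w - g' w)"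
proof -
  from assms obtain c c' where "has_bochner_integral M f c" "has_bochner_integral M g c"
    and "has_bochner_integral M f' c'" "has_bochner_integral M g' c'"
    unfolding same_integral_def by blast
  then show ?thesis
    by (intro same_integralI[where c="c - c'"] has_bochner_integral_diff)
qed

lemma same_integral_sum:
  assumes "\<And>i. i \<in> I \<Longrightarrow> same_integral M (f i) (g i)"
  shows "same_integral M (\<lambda>w. \<Sum>i\<in>I. f i w) (\<lambda>w. \<Sum>i\<in>I. g i w)"
proof -
  obtain c where
    "\<And>i. i \<in> I \<Longrightarrow> has_bochner_integral M (f i) (c i) \<and> has_bochner_integral M (g i) (c i)"
    using assms unfolding same_integral_def by metis
  then have "has_bochner_integral M (\<lambda>w. \<Sum>i\<in>I. f i w) (\<Sum>i\<in>I. c i)"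
    and "has_bochner_integral M (\<lambda>w. \<Sum>i\<in>I. g i w) (\<Sum>i\<in>I. c i)"
    by (simp_all add: has_bochner_integral_sum)
  then show ?thesis
    by (rule same_integralI)
qed

lemma ord_sel_mem:
  assumes "is_ordering K \<sigma>" "A \<subseteq> {1..K}" "A \<noteq> {}"
  shows "ord_sel K \<sigma> A \<in> A"
proof -
  let ?least = "LEAST i. i \<in> {1..K} \<and> \<sigma> i \<in> A"
  have "A \<subseteq> \<sigma> ` {1..K}"
    using assms(1,2) unfolding is_ordering_def bij_betw_def by simp
  with assms(3) obtain i where "i \<in> {1..K} \<and> \<sigma> i \<in> A"
    by fast
  then have "?least \<in> {1..K} \<and> \<sigma> ?least \<in> A"
    by (rule LeastI)
  then show ?thesis
    unfolding ord_sel_def by (rule conjunct2)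
qed

lemma gap_le_sum_internal_gaps:
  fixes \<mu> :: "'a \<Rightarrow> real"
  assumes "finite I" "S \<subseteq> I" "x \<in> I" "y \<in> S"
  shows "\<mu> x - \<mu> y
    \<le> (\<Sum>i\<in>I. \<Sum>j\<in>{j\<in>I. \<mu> j \<le> \<mu> i}. (\<mu> x - \<mu> j) * (if x = i \<and> j \<in> S then 1 else 0))"
    (is "_ \<le> (\<Sum>i\<in>I. ?g i)")
proof -
  have g_nonneg: "0 \<le> ?g i" for i
    by (rule sum_nonneg) auto
  show ?thesis
  proof (cases "\<mu> y \<le> \<mu> x")
    case True
    have "\<mu> x - \<mu> y = (\<mu> x - \<mu> y) * (if x = x \<and> y \<in> S then 1 else 0)"
      using assms by simp
    also have "\<dots> \<le> ?g x"
      using True assms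
      by (intro member_le_sum[where f="\<lambda>j. (\<mu> x - \<mu> j) * (if x = x \<and> j \<in> S then 1 else 0)"]) auto
    also have "\<dots> \<le> (\<Sum>i\<in>I. ?g i)"
      using assms g_nonneg by (intro member_le_sum) auto
    finally show ?thesis .
  next
    case False
    then have "\<mu> x - \<mu> y \<le> 0" by simp
    also have "\<dots> \<le> (\<Sum>i\<in>I. ?g i)"
      using g_nonneg by (rule sum_nonneg)
    finally show ?thesis .
  qed
qed

lemma ordering_regret_le_int_regret_const_losses:
  fixes \<mu> :: "nat \<Rightarrow> real"
  assumes \<sigma>: "is_ordering K \<sigma>"
    and S: "\<And>t. t \<in> {1..T} \<Longrightarrow> S t w \<subseteq> {1..K} \<and> S t w \<noteq> {}"
    and k: "\<And>t. t \<in> {1..T} \<Longrightarrow> k t w \<in> S t w"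
  shows "ordering_regret K (\<lambda>_ _. \<mu>) S k T \<sigma> w
    \<le> (\<Sum>i\<in>{1..K}. \<Sum>j\<in>{j\<in>{1..K}. \<mu> j \<le> \<mu> i}. int_regret (\<lambda>_ _. \<mu>) S k T i j w)"
proof -
  have "ordering_regret K (\<lambda>_ _. \<mu>) S k T \<sigma> w
      \<le> (\<Sum>t=1..T. \<Sum>i\<in>{1..K}. \<Sum>j\<in>{j\<in>{1..K}. \<mu> j \<le> \<mu> i}.
            (\<mu> (k t w) - \<mu> j) * (if k t w = i \<and> j \<in> S t w then 1 else 0))"
    (is "_ \<le> sum ?bound _")
    unfolding ordering_regret_def
  proof (rule sum_mono)
    fix t assume "t \<in> {1..T}"
    with S k ord_sel_mem[OF \<sigma>] show "\<mu> (k t w) - \<mu> (ord_sel K \<sigma> (S t w)) \<le> ?bound t"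
      by (intro gap_le_sum_internal_gaps) blast+
  qed
  also have "\<dots> = (\<Sum>i\<in>{1..K}. \<Sum>j\<in>{j\<in>{1..K}. \<mu> j \<le> \<mu> i}. int_regret (\<lambda>_ _. \<mu>) S k T i j w)"
    unfolding int_regret_def by (subst sum.swap) (intro sum.cong refl sum.swap)
  finally show ?thesis .
qed

locale iid_losses = prob_space M
  for M :: "'w measure" and F :: "nat \<Rightarrow> 'w measure" and K :: nat
    and L :: "nat \<Rightarrow> 'w \<Rightarrow> nat \<Rightarrow> real" and \<mu> :: "nat \<Rightarrow> real" +
  assumes loss_range: "\<And>t w j. 1 \<le> t \<Longrightarrow> w \<in> space M \<Longrightarrow> j \<in> {1..K} \<Longrightarrow> L t w j \<in> {0..1}"
    and loss_meas: "\<And>t j. 1 \<le> t \<Longrightarrow> j \<in> {1..K} \<Longrightarrow> (\<lambda>w. L t w j) \<in> borel_measurable M"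
    and F_sub: "\<And>t. 1 \<le> t \<Longrightarrow> subalgebra M (F t)"
    and indep: "\<And>t. 1 \<le> t \<Longrightarrow>
                  indep_set (sets (vimage_algebra (space M) (loss_vec K L t) (loss_space K))) (sets (F t))"
    and ident: "\<And>t. 1 \<le> t \<Longrightarrow>
                  distr M (loss_space K) (loss_vec K L t) = distr M (loss_space K) (loss_vec K L 1)"
    and mean: "\<And>j. j \<in> {1..K} \<Longrightarrow> \<mu> j = (\<integral>w. L 1 w j \<partial>M)"
begin

lemma loss_vec_measurable: "1 \<le> t \<Longrightarrow> loss_vec K L t \<in> measurable M (loss_space K)"
  unfolding loss_vec_def by (intro measurable_restrict loss_meas) auto

lemma integrable_loss: "1 \<le> t \<Longrightarrow> a \<in> {1..K} \<Longrightarrow> integrable M (\<lambda>w. L t w a)"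
  using loss_range by (intro integrable_const_bound[where B=1] AE_I2 loss_meas) auto

lemma expectation_loss:
  assumes t: "1 \<le> t" and a: "a \<in> {1..K}"
  shows "expectation (\<lambda>w. L t w a) = \<mu> a"
proof -
  have "expectation (\<lambda>w. L s w a) = (\<integral>x. x a \<partial>distr M (loss_space K) (loss_vec K L s))"
    if "1 \<le> s" for s
    using integral_distr[OF loss_vec_measurable[OF that] measurable_component_singleton[OF a]] a
    by (simp add: loss_vec_def)
  from this[OF t] this[of 1] show ?thesis
    unfolding ident[OF t] mean[OF a] by simp
qed

lemma has_bochner_integral_loss_mult:
  assumes t: "1 \<le> t" and a: "a \<in> {1..K}"
    and Z: "Z \<in> borel_measurable (F t)" "integrable M Z"
  shows "has_bochner_integral M (\<lambda>w. L t w a * Z w) (\<mu> a * expectation Z)"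
proof -
  let ?V = "vimage_algebra (space M) (loss_vec K L t) (loss_space K)"
  have "subalgebra M ?V"
    unfolding subalgebra_def using sets_image_in_sets[OF refl loss_vec_measurable[OF t]] by simp
  moreover have "loss_vec K L t \<in> space M \<rightarrow> space (loss_space K)"
    by (rule Pi_I) (rule measurable_space[OF loss_vec_measurable[OF t]])
  then have "(\<lambda>w. loss_vec K L t w a) \<in> borel_measurable ?V"
    by (rule measurable_compose[OF measurable_vimage_algebra1 measurable_component_singleton[OF a]])
  then have "(\<lambda>w. L t w a) \<in> borel_measurable ?V"
    using a by (simp add: loss_vec_def)
  ultimately show ?thesis
    using has_bochner_integral_mult_indep[OF indep[OF t] _ F_sub[OF t] _ integrable_loss[OF t a] Z]
    unfolding expectation_loss[OF t a] by blast
qed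

lemma same_integral_weighted_loss_mean:
  assumes t: "1 \<le> t"
    and X: "X \<in> measurable (F t) (count_space UNIV)" "\<And>w. w \<in> space M \<Longrightarrow> X w \<in> {1..K}"
    and Z: "Z \<in> borel_measurable (F t)" "\<And>w. w \<in> space M \<Longrightarrow> \<bar>Z w\<bar> \<le> B"
  shows "same_integral M (\<lambda>w. L t w (X w) * Z w) (\<lambda>w. \<mu> (X w) * Z w)"
proof -
  \<comment> \<open>Split according to the value of X; each piece of the weight is still F t-measurable.\<close>
  define Z' where "Z' a w = (if X w = a then Z w else 0)" for a w
  have Z'_meas: "Z' a \<in> borel_measurable (F t)" for a
    unfolding Z'_def using pred_count_space_const1[OF X(1)]
    by (intro measurable_If Z(1) measurable_const) (simp_all add: pred_def)
  have Z'_int: "integrable M (Z' a)" for a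
    using measurable_from_subalg[OF F_sub[OF t] Z'_meas] Z(2)
    by (intro integrable_const_bound[where B=B] AE_I2)
      (auto simp: Z'_def intro: order_trans[OF abs_ge_zero])
  have "same_integral M (\<lambda>w. L t w a * Z' a w) (\<lambda>w. \<mu> a * Z' a w)" if "a \<in> {1..K}" for a
    using has_bochner_integral_loss_mult[OF t that Z'_meas Z'_int]
    by (rule same_integralI) (intro has_bochner_integral_mult_right has_bochner_integral_integrable Z'_int)
  then have "same_integral M (\<lambda>w. \<Sum>a\<in>{1..K}. L t w a * Z' a w) (\<lambda>w. \<Sum>a\<in>{1..K}. \<mu> a * Z' a w)"
    by (rule same_integral_sum)
  then show ?thesis
  proof (rule same_integral_cong)
    fix w assume "w \<in> space M"
    then have "X w \<in> {1..K}" by (rule X(2))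
    then show "(\<Sum>a\<in>{1..K}. L t w a * Z' a w) = L t w (X w) * Z w"
      and "(\<Sum>a\<in>{1..K}. \<mu> a * Z' a w) = \<mu> (X w) * Z w"
      unfolding Z'_def by (simp_all add: if_distrib[of "times _"] sum.delta' cong: if_cong)
  qed
qed

lemma same_integral_loss_mean:
  assumes "1 \<le> t" "X \<in> measurable (F t) (count_space UNIV)" "\<And>w. w \<in> space M \<Longrightarrow> X w \<in> {1..K}"
  shows "same_integral M (\<lambda>w. L t w (X w)) (\<lambda>w. \<mu> (X w))"
  using same_integral_weighted_loss_mean[OF assms measurable_const[of 1], of 1] by simp

end

locale iid_sleeping_bandit = iid_losses M F K L \<mu>
  for M :: "'w measure" and F K L \<mu> +
  fixes S :: "nat \<Rightarrow> 'w \<Rightarrow> nat set" and k :: "nat \<Rightarrow> 'w \<Rightarrow> nat" and \<sigma> :: "nat \<Rightarrow> nat"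
  assumes S_sub: "\<And>t w. 1 \<le> t \<Longrightarrow> w \<in> space M \<Longrightarrow> S t w \<subseteq> {1..K} \<and> S t w \<noteq> {}"
    and k_in: "\<And>t w. 1 \<le> t \<Longrightarrow> w \<in> space M \<Longrightarrow> k t w \<in> S t w"
    and S_adapt: "\<And>t. 1 \<le> t \<Longrightarrow> S t \<in> measurable (F t) (count_space UNIV)"
    and k_adapt: "\<And>t. 1 \<le> t \<Longrightarrow> k t \<in> measurable (F t) (count_space UNIV)"
    and ord: "is_ordering K \<sigma>"
begin

lemma played_arm_in_range: "1 \<le> t \<Longrightarrow> w \<in> space M \<Longrightarrow> k t w \<in> {1..K}"
  using S_sub k_in by (rule subsetD[OF conjunct1])

lemma ord_sel_in_range: "1 \<le> t \<Longrightarrow> w \<in> space M \<Longrightarrow> ord_sel K \<sigma> (S t w) \<in> {1..K}"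
  using S_sub ord_sel_mem[OF ord conjunct1 conjunct2, OF S_sub S_sub] by (rule subsetD[OF conjunct1])

lemma same_integral_ordering_regret:
  "same_integral M (ordering_regret K L S k T \<sigma>) (ordering_regret K (\<lambda>_ _. \<mu>) S k T \<sigma>)"
  unfolding ordering_regret_def
proof (intro same_integral_sum same_integral_diff)
  fix t assume "t \<in> {1..T}"
  then have t: "1 \<le> t" by simp
  show "same_integral M (\<lambda>w. L t w (k t w)) (\<lambda>w. \<mu> (k t w))"
    by (rule same_integral_loss_mean[OF t k_adapt[OF t] played_arm_in_range[OF t]])
  show "same_integral M (\<lambda>w. L t w (ord_sel K \<sigma> (S t w))) (\<lambda>w. \<mu> (ord_sel K \<sigma> (S t w)))"
    using measurable_compose[OF S_adapt[OF t] measurable_count_space[of "ord_sel K \<sigma>"]]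
    by (rule same_integral_loss_mean[OF t _ ord_sel_in_range[OF t]])
qed

lemma same_integral_int_regret:
  assumes j: "j \<in> {1..K}"
  shows "same_integral M (int_regret L S k T i j) (int_regret (\<lambda>_ _. \<mu>) S k T i j)"
  unfolding int_regret_def
proof (intro same_integral_sum)
  fix t assume "t \<in> {1..T}"
  then have t: "1 \<le> t" by simp
  define Z where "Z w = (if k t w = i \<and> j \<in> S t w then 1 else 0 :: real)" for w
  have "Measurable.pred (F t) (\<lambda>w. k t w = i \<and> j \<in> S t w)"
    by (rule pred_intros_logic(3)[OF pred_count_space_const1[OF k_adapt[OF t]]
          measurable_compose[OF S_adapt[OF t] measurable_count_space]])
  then have Z_meas: "Z \<in> borel_measurable (F t)"
    unfolding Z_def pred_def by (rule measurable_If[OF measurable_const measurable_const, rotated 2]) simp_all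
  have Z_bound: "\<bar>Z w\<bar> \<le> 1" for w
    by (simp add: Z_def)
  have "same_integral M (\<lambda>w. L t w (k t w) * Z w) (\<lambda>w. \<mu> (k t w) * Z w)"
    by (rule same_integral_weighted_loss_mean[OF t k_adapt[OF t] played_arm_in_range[OF t] Z_meas Z_bound])
  moreover have "same_integral M (\<lambda>w. L t w j * Z w) (\<lambda>w. \<mu> j * Z w)"
    by (rule same_integral_weighted_loss_mean[OF t measurable_count_space_const j Z_meas Z_bound])
  ultimately have "same_integral M (\<lambda>w. L t w (k t w) * Z w - L t w j * Z w)
      (\<lambda>w. \<mu> (k t w) * Z w - \<mu> j * Z w)"
    by (rule same_integral_diff)
  then show "same_integral M (\<lambda>w. (L t w (k t w) - L t w j) * Z w) (\<lambda>w. (\<mu> (k t w) - \<mu> j) * Z w)"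
    by (simp add: left_diff_distrib)
qed

end

theorem lemma2:
  fixes M :: "'w measure" and F :: "nat \<Rightarrow> 'w measure"
    and K T :: nat
    and L :: "nat \<Rightarrow> 'w \<Rightarrow> nat \<Rightarrow> real"
    and S :: "nat \<Rightarrow> 'w \<Rightarrow> nat set"
    and k :: "nat \<Rightarrow> 'w \<Rightarrow> nat"
    and \<mu> :: "nat \<Rightarrow> real"
    and \<sigma> :: "nat \<Rightarrow> nat"
  assumes prob: "prob_space M"
    and K_pos: "1 \<le> K"
    and loss_range: "\<And>t w j. 1 \<le> t \<Longrightarrow> w \<in> space M \<Longrightarrow> j \<in> {1..K} \<Longrightarrow> L t w j \<in> {0..1}"
    and loss_meas: "\<And>t j. 1 \<le> t \<Longrightarrow> j \<in> {1..K} \<Longrightarrow> (\<lambda>w. L t w j) \<in> borel_measurable M"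
    and S_sub: "\<And>t w. 1 \<le> t \<Longrightarrow> w \<in> space M \<Longrightarrow> S t w \<subseteq> {1..K} \<and> S t w \<noteq> {}"
    and k_in: "\<And>t w. 1 \<le> t \<Longrightarrow> w \<in> space M \<Longrightarrow> k t w \<in> S t w"
    and F_sub: "\<And>t. 1 \<le> t \<Longrightarrow> subalgebra M (F t)"
    and F_mono: "\<And>t. 1 \<le> t \<Longrightarrow> sets (F t) \<subseteq> sets (F (Suc t))"
    and S_adapt: "\<And>t. 1 \<le> t \<Longrightarrow> S t \<in> measurable (F t) (count_space UNIV)"
    and k_adapt: "\<And>t. 1 \<le> t \<Longrightarrow> k t \<in> measurable (F t) (count_space UNIV)"
    and past_losses: "\<And>s t j. 1 \<le> s \<Longrightarrow> s < t \<Longrightarrow> j \<in> {1..K} \<Longrightarrow>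
                        (\<lambda>w. L s w j) \<in> borel_measurable (F t)"
    and indep: "\<And>t. 1 \<le> t \<Longrightarrow>
                  prob_space.indep_set M
                    (sets (vimage_algebra (space M) (loss_vec K L t) (loss_space K))) (sets (F t))"
    and ident: "\<And>t. 1 \<le> t \<Longrightarrow>
                  distr M (loss_space K) (loss_vec K L t) = distr M (loss_space K) (loss_vec K L 1)"
    and mean: "\<And>j. j \<in> {1..K} \<Longrightarrow> \<mu> j = (\<integral>w. L 1 w j \<partial>M)"
    and ord: "is_ordering K \<sigma>"
  shows "(\<integral>w. ordering_regret K L S k T \<sigma> w \<partial>M)
           \<le> (\<Sum>i\<in>{1..K}. \<Sum>j\<in>{j\<in>{1..K}. \<mu> j \<le> \<mu> i}. (\<integral>w. int_regret L S k T i j w \<partial>M))"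
proof -
  interpret iid_sleeping_bandit M F K L \<mu> S k \<sigma>
    by (intro iid_sleeping_bandit.intro iid_losses.intro iid_losses_axioms.intro
        iid_sleeping_bandit_axioms.intro)
      (fact prob loss_range loss_meas F_sub indep ident mean S_sub k_in S_adapt k_adapt ord)+
  let ?D = "\<lambda>i. {j\<in>{1..K}. \<mu> j \<le> \<mu> i}"
  have int_regret: "same_integral M (int_regret L S k T i j) (int_regret (\<lambda>_ _. \<mu>) S k T i j)"
    if "j \<in> ?D i" for i j
    using that by (intro same_integral_int_regret) simp
  note int_regret_integrable = same_integralD(2)[OF int_regret]
  have "(\<integral>w. ordering_regret K L S k T \<sigma> w \<partial>M) = (\<integral>w. ordering_regret K (\<lambda>_ _. \<mu>) S k T \<sigma> w \<partial>M)"
    by (rule same_integralD(3)[OF same_integral_ordering_regret])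
  also have "\<dots> \<le> (\<integral>w. (\<Sum>i\<in>{1..K}. \<Sum>j\<in>?D i. int_regret (\<lambda>_ _. \<mu>) S k T i j w) \<partial>M)"
  proof (rule Bochner_Integration.integral_mono)
    show "integrable M (ordering_regret K (\<lambda>_ _. \<mu>) S k T \<sigma>)"
      by (rule same_integralD(2)[OF same_integral_ordering_regret])
    show "integrable M (\<lambda>w. \<Sum>i\<in>{1..K}. \<Sum>j\<in>?D i. int_regret (\<lambda>_ _. \<mu>) S k T i j w)"
      by (intro Bochner_Integration.integrable_sum int_regret_integrable)
    show "ordering_regret K (\<lambda>_ _. \<mu>) S k T \<sigma> w
        \<le> (\<Sum>i\<in>{1..K}. \<Sum>j\<in>?D i. int_regret (\<lambda>_ _. \<mu>) S k T i j w)" if "w \<in> space M" for w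
      using that by (intro ordering_regret_le_int_regret_const_losses ord S_sub k_in) simp_all
  qed
  also have "\<dots> = (\<Sum>i\<in>{1..K}. \<Sum>j\<in>?D i. (\<integral>w. int_regret (\<lambda>_ _. \<mu>) S k T i j w \<partial>M))"
    by (simp only: Bochner_Integration.integral_sum Bochner_Integration.integrable_sum int_regret_integrable)
  also have "\<dots> = (\<Sum>i\<in>{1..K}. \<Sum>j\<in>?D i. (\<integral>w. int_regret L S k T i j w \<partial>M))"
    using same_integralD(3)[OF int_regret] by simp
  finally show ?thesis .
qed

end
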